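(* Let $f,g:\mathbb{R}^{N}\rightarrow (-\infty ,\infty ]$ be Borel measurable with $m_{f}:=\inf f\in \mathbb{R}$, $m_{g}:=\inf g\in \mathbb{R}$ and $m_{f}+m_{g}\geq 0$, and set $m_{f,g}:=(m_{f}-m_{g})/2$. Then $f\Box g\geq 0$, $\check{f}-m_{f,g}\geq 0$, $\check{g}+m_{f,g}\geq 0$, and $$\|(f\Box g)^{-1}\|_{\phi }\leq 2^{N-1}\left(\|(\check{f}-m_{f,g})^{-1}\|_{\phi }+\|(\check{g}+m_{f,g})^{-1}\|_{\phi }\right)$$ for every Young function $\phi$.
   Context: $(f\Box g)(x):=\inf_{y\in \mathbb{R}^{N}}(f(x-y)+g(y))$. For $h\ge0$, $h^{-1}:=1/h$ (with $1/0=\infty$, $1/\infty=0$). A Young function is a nonconstant $\phi:[0,\infty]\to[0,\infty]$ with $\phi(0)=0$, nondecreasing, convex and left continuous; the Luxemburg norm of a measurable $h$ is $\|h\|_{\phi}:=\inf\{r>0:\int_{\mathbb{R}^N}\phi(r^{-1}|h|)\le 1\}$ ($=\infty$ if no such $r$). Enclosing balls: for $X\subset\mathbb{R}^N$ nonempty and bounded, $\overline{B}_X$ is the unique closed ball of minimal diameter containing $X$; if $X$ is unbounded, $\overline{B}_X:=\mathbb{R}^N$; $\overline{B}_\emptyset:=\{0\}$. For $f:\mathbb{R}^N\to[-\infty,\infty]$ and $\xi\in[-\infty,\infty]$ let $F^-_\xi:=\{x: f(x)<\xi\}$, let $\rho^-_f(\xi)\in[0,\infty]$ be the radius of $\overline{B}_{F^-_\xi}$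 ($\infty$ if it is $\mathbb{R}^N$), let $\gamma^-_f(t):=\sup\{\xi:\rho^-_f(\xi)\le t\}$ for $t\in[0,\infty)$, and $\check f(x):=\gamma^-_f(|x|)$. (Equivalently $\check f=-\widehat{(-f)}$ where $\hat f(x)=\gamma^+_f(|x|)$, $\gamma^+_f(t)=\inf\{\xi:\rho^+_f(\xi)\le t\}$, $\rho^+_f(\xi)$ the radius of the enclosing ball of $\{f>\xi\}$.) *)

theory Defs
  imports "HOL-Analysis.Analysis"
begin

definition inf_conv :: "('a::real_vector \<Rightarrow> ereal) \<Rightarrow> ('a \<Rightarrow> ereal) \<Rightarrow> 'a \<Rightarrow> ereal" where
  "inf_conv f g x = (INF y. f (x - y) + g y)"

text \<open>Reciprocal of a nonnegative extended real, with 1/0 = infinity and 1/infinity = 0.\<close>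
definition recip :: "ereal \<Rightarrow> ennreal" where
  "recip t = inverse (e2ennreal t)"

definition young_function :: "(ennreal \<Rightarrow> ennreal) \<Rightarrow> bool" where
  "young_function \<phi> \<longleftrightarrow>
     (\<exists>x y. \<phi> x \<noteq> \<phi> y) \<and> \<phi> 0 = 0 \<and> mono \<phi> \<and>
     (\<forall>x y t. t \<le> 1 \<longrightarrow> \<phi> (t * x + (1 - t) * y) \<le> t * \<phi> x + (1 - t) * \<phi> y) \<and>
     (\<forall>x. (\<phi> \<longlongrightarrow> \<phi> x) (at_left x))"

text \<open>Luxemburg norm w.r.t. Lebesgue measure (infimum of the empty set is infinity).\<close>
definition lux_norm :: "(ennreal \<Rightarrow> ennreal) \<Rightarrow> ('a::euclidean_space \<Rightarrow> ennreal) \<Rightarrow> ennreal" where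
  "lux_norm \<phi> h = Inf {ennreal r | r. r > 0 \<and>
      (\<integral>\<^sup>+ x. \<phi> (ennreal (1 / r) * h x) \<partial>lebesgue) \<le> 1}"

definition enclosing_ball :: "'a::euclidean_space set \<Rightarrow> 'a set" where
  "enclosing_ball X =
     (if X = {} then {0}
      else if \<not> bounded X then UNIV
      else (THE B. (\<exists>c r. B = cball c r) \<and> X \<subseteq> B \<and>
                   (\<forall>c' r'. X \<subseteq> cball c' r' \<longrightarrow> diameter B \<le> diameter (cball c' r'))))"

definition enc_radius :: "'a::euclidean_space set \<Rightarrow> ereal" where
  "enc_radius X = (if enclosing_ball X = UNIV then \<infinity> else ereal (diameter (enclosing_ball X) / 2))"

definition rho_minus :: "('a::euclidean_space \<Rightarrow> ereal) \<Rightarrow> ereal \<Rightarrow> ereal" where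
  "rho_minus f \<xi> = enc_radius {x. f x < \<xi>}"

definition gamma_minus :: "('a::euclidean_space \<Rightarrow> ereal) \<Rightarrow> real \<Rightarrow> ereal" where
  "gamma_minus f t = Sup {\<xi>. rho_minus f \<xi> \<le> ereal t}"

definition check :: "('a::euclidean_space \<Rightarrow> ereal) \<Rightarrow> 'a \<Rightarrow> ereal" where
  "check f x = gamma_minus f (norm x)"

end

theory Submission
  imports Defs
begin

text \<open>
  If \<open>f (x - y) + g y < a\<close>, then \<open>f \<ge> mf\<close> and \<open>g \<ge> mg\<close> force \<open>x - y\<close> into the sublevel set
  \<open>{f < a - mg}\<close> and \<open>y\<close> into \<open>{g < a - mf}\<close>. Hence the sublevel set \<open>{inf_conv f g < a}\<close> lies in
  the Minkowski sum of two sets whose enclosing balls have radii \<open>rho_minus f (a - mg)\<close> and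
  \<open>rho_minus g (a - mf)\<close>, i.e.\ in a ball whose radius is the sum of the two. Since
  \<open>0 \<le> mf + mg\<close>, the shifted rearrangements \<open>check f - (mf - mg)/2\<close> and \<open>check g + (mf - mg)/2\<close>
  stay below \<open>a\<close> on the centred balls of these two radii, and \<open>(r + s)^N \<le> 2^(N-1) (r^N + s^N)\<close>
  compares the volumes. So every superlevel set of \<open>\<phi> (1 / (r * inf_conv f g))\<close> has measure at
  most \<open>2^(N-1)\<close> times the sum of the measures of the corresponding superlevel sets for the two
  rearrangements. The layer-cake formula integrates this, and \<open>\<phi> (c * t) \<le> c * \<phi> t\<close> for
  \<open>c \<le> 1\<close> turns the integral inequality into the bound on Luxemburg norms.
\<close>

section \<open>Enclosing balls\<close>

definition farthest_dist :: "'a::metric_space set \<Rightarrow> 'a \<Rightarrow> real" where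
  "farthest_dist X c = (SUP x\<in>X. dist c x)"

lemma dist_le_farthest_dist: "bounded X \<Longrightarrow> x \<in> X \<Longrightarrow> dist c x \<le> farthest_dist X c"
  unfolding farthest_dist_def
  by (intro cSUP_upper) (auto simp: bounded_any_center[of X c] bdd_above_def)

lemma farthest_dist_le: "X \<noteq> {} \<Longrightarrow> (\<And>x. x \<in> X \<Longrightarrow> dist c x \<le> r) \<Longrightarrow> farthest_dist X c \<le> r"
  unfolding farthest_dist_def by (intro cSUP_least) auto

lemma farthest_dist_nonneg:
  assumes "bounded X" "X \<noteq> {}" shows "0 \<le> farthest_dist X c"
proof -
  obtain x where "x \<in> X" using assms(2) by blast
  then show ?thesis using dist_le_farthest_dist[OF assms(1)] zero_le_dist[of c x] by (meson order_trans)
qed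

lemma lipschitz_on_farthest_dist:
  assumes "bounded X" "X \<noteq> {}"
  shows "1-lipschitz_on S (farthest_dist X)"
proof (rule lipschitz_onI)
  have "farthest_dist X c \<le> farthest_dist X c' + dist c c'" for c c'
  proof (rule farthest_dist_le[OF assms(2)])
    fix x assume "x \<in> X"
    have "dist c x \<le> dist c c' + dist c' x" by (rule dist_triangle)
    also have "\<dots> \<le> dist c c' + farthest_dist X c'"
      using dist_le_farthest_dist[OF assms(1) \<open>x \<in> X\<close>] by simp
    finally show "dist c x \<le> farthest_dist X c' + dist c c'" by simp
  qed
  note shift = this
  show "dist (farthest_dist X c) (farthest_dist X c') \<le> 1 * dist c c'" for c c'
    using shift[of c c'] shift[of c' c] dist_commute[of c' c] by (simp add: dist_real_def abs_le_iff)
qed simp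

lemma farthest_dist_attains_min:
  fixes X :: "'a::heine_borel set"
  assumes b: "bounded X" and ne: "X \<noteq> {}"
  obtains c0 where "\<And>c. farthest_dist X c0 \<le> farthest_dist X c"
proof -
  obtain x0 where x0: "x0 \<in> X" using ne by auto
  let ?K = "cball x0 (farthest_dist X x0)"
  have "x0 \<in> ?K" using farthest_dist_nonneg[OF b ne] by simp
  have "continuous_on ?K (farthest_dist X)"
    using lipschitz_on_farthest_dist[OF b ne] by (rule lipschitz_on_continuous_on)
  then obtain c0 where c0: "\<forall>c\<in>?K. farthest_dist X c0 \<le> farthest_dist X c"
    using continuous_attains_inf[OF compact_cball _, of x0 "farthest_dist X x0"] \<open>x0 \<in> ?K\<close> by blast
  have "farthest_dist X c0 \<le> farthest_dist X c" for c
  proof (cases "c \<in> ?K")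
    case False
    \<comment> \<open>outside \<open>?K\<close>, the distance to \<open>x0\<close> alone already beats the value at \<open>x0\<close>\<close>
    then have "farthest_dist X x0 < dist c x0" by (simp add: dist_commute)
    also have "\<dots> \<le> farthest_dist X c" using dist_le_farthest_dist[OF b x0] .
    finally show ?thesis using c0 \<open>x0 \<in> ?K\<close> by (meson less_le_not_le order_trans)
  qed (use c0 in blast)
  then show thesis by (rule that)
qed

lemma dist_midpoint_power2:
  fixes a b x :: "'a::real_inner"
  shows "(dist ((a + b) /\<^sub>R 2) x)\<^sup>2 = ((dist a x)\<^sup>2 + (dist b x)\<^sup>2) / 2 - (dist a b)\<^sup>2 / 4"
proof -
  have "(a + b) /\<^sub>R 2 - x = ((a - x) + (b - x)) /\<^sub>R 2" and "a - b = (a - x) - (b - x)"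
    by (simp_all add: algebra_simps flip: scaleR_add_left)
  then show ?thesis
    by (simp add: dist_norm power2_norm_eq_inner inner_add_left inner_add_right
        inner_diff_left inner_diff_right inner_commute field_simps)
qed

lemma farthest_dist_min_unique:
  fixes X :: "'a::real_inner set"
  assumes b: "bounded X" and ne: "X \<noteq> {}"
    and min: "\<And>c. farthest_dist X c1 \<le> farthest_dist X c" and eq: "farthest_dist X c2 = farthest_dist X c1"
  shows "c2 = c1"
proof (rule ccontr)
  assume "c2 \<noteq> c1"
  let ?r = "farthest_dist X c1" and ?d = "dist c1 c2"
  \<comment> \<open>the midpoint of two optimal centres would do strictly better\<close>
  have "farthest_dist X ((c1 + c2) /\<^sub>R 2) \<le> sqrt (?r\<^sup>2 - ?d\<^sup>2 / 4)"
  proof (rule farthest_dist_le[OF ne])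
    fix x assume x: "x \<in> X"
    have "dist c1 x \<le> ?r" "dist c2 x \<le> ?r"
      using dist_le_farthest_dist[OF b x] eq by metis+
    then have "(dist c1 x)\<^sup>2 \<le> ?r\<^sup>2" "(dist c2 x)\<^sup>2 \<le> ?r\<^sup>2" by (simp_all add: power_mono)
    then have "(dist ((c1 + c2) /\<^sub>R 2) x)\<^sup>2 \<le> ?r\<^sup>2 - ?d\<^sup>2 / 4"
      unfolding dist_midpoint_power2 by argo
    then show "dist ((c1 + c2) /\<^sub>R 2) x \<le> sqrt (?r\<^sup>2 - ?d\<^sup>2 / 4)"
      by (simp add: real_le_rsqrt)
  qed
  also have "\<dots> < sqrt (?r\<^sup>2)"
    using \<open>c2 \<noteq> c1\<close> by (simp only: real_sqrt_less_iff) simp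
  also have "\<dots> = ?r" using farthest_dist_nonneg[OF b ne] by simp
  finally show False using min by (meson not_le)
qed

lemma enclosing_ball_eq_cball_farthest_dist:
  fixes X :: "'a::euclidean_space set"
  assumes b: "bounded X" and ne: "X \<noteq> {}" and min: "\<And>c. farthest_dist X c0 \<le> farthest_dist X c"
  shows "enclosing_ball X = cball c0 (farthest_dist X c0)"
proof -
  let ?r0 = "farthest_dist X c0"
  let ?P = "\<lambda>B. (\<exists>c r. B = cball c r) \<and> X \<subseteq> B \<and>
                   (\<forall>c' r'. X \<subseteq> cball c' r' \<longrightarrow> diameter B \<le> diameter (cball c' r'))"
  have r0: "0 \<le> ?r0" by (rule farthest_dist_nonneg[OF b ne])
  have covers: "X \<subseteq> cball c0 ?r0" using dist_le_farthest_dist[OF b] by auto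
  have fits: "farthest_dist X c \<le> r" "0 \<le> r" if "X \<subseteq> cball c r" for c r
  proof -
    have "farthest_dist X c \<le> r" using that by (intro farthest_dist_le[OF ne]) auto
    then show "farthest_dist X c \<le> r" "0 \<le> r" using farthest_dist_nonneg[OF b ne, of c] by auto
  qed
  have "?P (cball c0 ?r0)"
  proof (intro conjI allI impI)
    fix c' r' assume "X \<subseteq> cball c' r'"
    then have "?r0 \<le> r'" "0 \<le> r'" using fits min[of c'] by (meson order_trans)+
    then show "diameter (cball c0 ?r0) \<le> diameter (cball c' r')" using r0 by simp
  qed (use covers in auto)
  moreover have "B = cball c0 ?r0" if "?P B" for B
  proof -
    from that obtain c r where B: "B = cball c r" "X \<subseteq> cball c r"
      and "diameter (cball c r) \<le> diameter (cball c0 ?r0)" using covers by blast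
    then have "r \<le> ?r0" using fits(2)[OF B(2)] r0 by simp
    then have fc: "farthest_dist X c = ?r0" and "r = ?r0" using min[of c] fits[OF B(2)] by linarith+
    have "c = c0" by (rule farthest_dist_min_unique[OF b ne min fc])
    then show ?thesis using B(1) \<open>r = ?r0\<close> by simp
  qed
  ultimately have "(THE B. ?P B) = cball c0 ?r0" by (rule the_equality)
  then show ?thesis unfolding enclosing_ball_def using ne b by simp
qed

lemma enc_radius_bounded:
  fixes X :: "'a::euclidean_space set"
  assumes b: "bounded X" and ne: "X \<noteq> {}"
  obtains c r where "X \<subseteq> cball c r" "0 \<le> r" "enc_radius X = ereal r"
    "\<And>c' r'. X \<subseteq> cball c' r' \<Longrightarrow> r \<le> r'"
proof -
  obtain c0 where min: "\<And>c. farthest_dist X c0 \<le> farthest_dist X c"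
    using farthest_dist_attains_min[OF b ne] by blast
  let ?r0 = "farthest_dist X c0"
  have r0: "0 \<le> ?r0" by (rule farthest_dist_nonneg[OF b ne])
  have "cball c0 ?r0 \<noteq> UNIV" using bounded_cball not_bounded_UNIV by metis
  then have "enc_radius X = ereal ?r0"
    unfolding enc_radius_def enclosing_ball_eq_cball_farthest_dist[OF b ne min]
    using r0 by (simp add: not_less)
  moreover have "?r0 \<le> r'" if "X \<subseteq> cball c' r'" for c' r'
  proof -
    have "farthest_dist X c' \<le> r'" using that by (intro farthest_dist_le[OF ne]) auto
    then show ?thesis using min[of c'] by linarith
  qed
  moreover have "X \<subseteq> cball c0 ?r0" using dist_le_farthest_dist[OF b] by auto
  ultimately show thesis using r0 by (intro that)
qed

lemma enc_radius_empty [simp]: "enc_radius ({}::'a::euclidean_space set) = 0"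
proof -
  have "{0::'a} \<noteq> UNIV" using not_bounded_UNIV bounded_insert bounded_empty by metis
  then show ?thesis unfolding enc_radius_def enclosing_ball_def by (simp add: zero_ereal_def)
qed

lemma enc_radius_unbounded: "\<not> bounded X \<Longrightarrow> enc_radius X = \<infinity>"
  unfolding enc_radius_def enclosing_ball_def by auto

lemma enc_radius_nonneg: "0 \<le> enc_radius (X::'a::euclidean_space set)"
proof (cases "X = {} \<or> \<not> bounded X")
  case False
  then have "bounded X" "X \<noteq> {}" by auto
  then obtain c r where "0 \<le> r" "enc_radius X = ereal r"
    by (elim enc_radius_bounded)
  then show ?thesis by simp
qed (auto simp: enc_radius_unbounded)

lemma enc_radius_mono:
  fixes X Y :: "'a::euclidean_space set"
  assumes XY: "X \<subseteq> Y" shows "enc_radius X \<le> enc_radius Y"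
proof (cases "X = {} \<or> \<not> bounded Y")
  case True
  then show ?thesis using enc_radius_nonneg[of Y] by (auto simp: enc_radius_unbounded)
next
  case False
  then have "bounded X" "X \<noteq> {}" "bounded Y" "Y \<noteq> {}"
    using XY bounded_subset by auto
  obtain cY rY where Y: "Y \<subseteq> cball cY rY" "0 \<le> rY" "enc_radius Y = ereal rY"
    "\<And>c' r'. Y \<subseteq> cball c' r' \<Longrightarrow> rY \<le> r'"
    using enc_radius_bounded[OF \<open>bounded Y\<close> \<open>Y \<noteq> {}\<close>] by blast
  obtain cX rX where X: "X \<subseteq> cball cX rX" "0 \<le> rX" "enc_radius X = ereal rX"
    "\<And>c' r'. X \<subseteq> cball c' r' \<Longrightarrow> rX \<le> r'"
    using enc_radius_bounded[OF \<open>bounded X\<close> \<open>X \<noteq> {}\<close>] by blast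
  have "rX \<le> rY" using X(4) Y(1) XY by (meson order_trans)
  then show ?thesis using X(3) Y(3) by simp
qed

section \<open>Young functions and the Luxemburg integrand\<close>

lemma recip_antimono: "y \<le> y' \<Longrightarrow> recip y' \<le> recip y"
  unfolding recip_def
  using e2ennreal_mono ereal_inverse_antimono inverse_ennreal.rep_eq less_eq_ennreal.rep_eq by auto

lemma recip_infinity [simp]: "recip \<infinity> = 0"
  unfolding recip_def by (simp add: top_ereal_def[symmetric] flip: top_ennreal.abs_eq e2ennreal_def)

lemma recip_ereal_pos: "0 < a \<Longrightarrow> recip (ereal a) = ennreal (1 / a)"
  unfolding recip_def by (simp add: inverse_ennreal inverse_eq_divide)

lemma young_function_mono: "young_function \<phi> \<Longrightarrow> mono \<phi>"
  unfolding young_function_def by auto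

lemma young_function_zero: "young_function \<phi> \<Longrightarrow> \<phi> 0 = 0"
  unfolding young_function_def by auto

lemma young_function_scale:
  assumes y: "young_function \<phi>" and c: "c \<le> 1"
  shows "\<phi> (c * x) \<le> c * \<phi> x"
proof -
  have "\<phi> (c * x + (1 - c) * 0) \<le> c * \<phi> x + (1 - c) * \<phi> 0"
    using y c unfolding young_function_def by blast
  then show ?thesis using young_function_zero[OF y] by simp
qed

lemma young_function_superlevel_left_open:
  assumes y: "young_function \<phi>" and c: "c < \<phi> z"
  obtains w where "0 < w" "ennreal w < z" "c < \<phi> (ennreal w)"
proof -
  have "z \<noteq> 0" using c young_function_zero[OF y] by auto
  then have z: "0 < z" by (simp add: zero_less_iff_neq_zero)
  have "(\<phi> \<longlongrightarrow> \<phi> z) (at_left z)" using y unfolding young_function_def by auto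
  then have "eventually (\<lambda>w. c < \<phi> w) (at_left z)" using c by (rule order_tendstoD(1))
  then have "\<exists>b<z. \<forall>w>b. w < z \<longrightarrow> c < \<phi> w" by (simp only: eventually_at_left[OF z])
  then obtain b where b: "b < z" "\<And>w. b < w \<Longrightarrow> w < z \<Longrightarrow> c < \<phi> w" by blast
  obtain z' where z': "b < z'" "z' < z" using dense[OF b(1)] by blast
  have "z' \<noteq> top" using z'(2) top.not_eq_extremum by fastforce
  then obtain w where w: "z' = ennreal w" "0 \<le> w" by (cases z' rule: ennreal_cases) auto
  have "c < \<phi> z'" using b(2)[OF z'] .
  then have "w \<noteq> 0" using w young_function_zero[OF y] by auto
  then show thesis using that[of w] w z' \<open>c < \<phi> z'\<close> by simp
qed

definition lux_integrand :: "(ennreal \<Rightarrow> ennreal) \<Rightarrow> real \<Rightarrow> ereal \<Rightarrow> ennreal" where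
  "lux_integrand \<phi> r y = \<phi> (ennreal (1 / r) * recip y)"

lemma lux_integrand_antimono:
  "young_function \<phi> \<Longrightarrow> y \<le> y' \<Longrightarrow> lux_integrand \<phi> r y' \<le> lux_integrand \<phi> r y"
  unfolding lux_integrand_def using young_function_mono recip_antimono
  by (metis monoD mult_left_mono zero_le)

lemma lux_integrand_infinity [simp]: "young_function \<phi> \<Longrightarrow> lux_integrand \<phi> r \<infinity> = 0"
  unfolding lux_integrand_def by (simp add: young_function_zero)

lemma lux_integrand_superlevel_right_open:
  assumes y: "young_function \<phi>" and r: "0 < r" and t: "c < lux_integrand \<phi> r (ereal a)"
  obtains a' where "a < a'" "c < lux_integrand \<phi> r (ereal a')"
proof -
  obtain w where w: "0 < w" "ennreal w < ennreal (1 / r) * recip (ereal a)" "c < \<phi> (ennreal w)"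
    using young_function_superlevel_left_open[OF y t[unfolded lux_integrand_def]] by blast
  have recip_scaled: "ennreal (1 / r) * recip (ereal b) = ennreal (1 / (r * b))" if "0 < b" for b
    using r that by (simp add: recip_ereal_pos flip: ennreal_mult)
  \<comment> \<open>\<open>a' = 1/(r w)\<close> is the point where \<open>1/(r a')\<close> drops to the value \<open>w\<close>\<close>
  have "a < 1 / (r * w)"
  proof (cases "0 < a")
    case True
    then have "w < 1 / (r * a)" using w recip_scaled[OF True] by (simp add: ennreal_less_iff)
    then have "w * (r * a) < 1" using r True by (simp add: field_simps)
    then show ?thesis using r w(1) by (simp add: field_simps)
  next
    case False
    have "0 < 1 / (r * w)" using r w(1) by simp
    then show ?thesis using False by linarith
  qed
  moreover have "ennreal (1 / r) * recip (ereal (1 / (r * w))) = ennreal w"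
    using recip_scaled[of "1 / (r * w)"] r w(1) by simp
  ultimately show thesis using that[of "1 / (r * w)"] w(3) unfolding lux_integrand_def by simp
qed

section \<open>The radial rearrangement\<close>

lemma rho_minus_mono: "\<xi> \<le> \<xi>' \<Longrightarrow> rho_minus f \<xi> \<le> rho_minus f \<xi>'"
  unfolding rho_minus_def by (rule enc_radius_mono) (auto elim: less_le_trans)

lemma gamma_minus_mono: "s \<le> s' \<Longrightarrow> gamma_minus f s \<le> gamma_minus f s'"
  unfolding gamma_minus_def by (rule Sup_subset_mono) (auto intro: order.trans)

lemma check_le_of_norm_less_rho_minus:
  assumes "ereal (norm x) < rho_minus f \<alpha>" shows "check f x \<le> \<alpha>"
  unfolding check_def gamma_minus_def
proof (rule Sup_least)
  fix \<xi> assume "\<xi> \<in> {\<xi>. rho_minus f \<xi> \<le> ereal (norm x)}"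
  show "\<xi> \<le> \<alpha>"
  proof (rule ccontr)
    assume "\<not> \<xi> \<le> \<alpha>"
    then have "rho_minus f \<alpha> \<le> rho_minus f \<xi>" by (intro rho_minus_mono) simp
    then show False using \<open>\<xi> \<in> _\<close> assms by simp
  qed
qed

lemma Inf_range_le_check:
  assumes "Inf (range f) = ereal m" shows "ereal m \<le> check f x"
proof -
  have "{u. f u < ereal m} = {}" using assms by (auto simp: not_less) (metis INF_lower UNIV_I not_le)
  then have "rho_minus f (ereal m) \<le> ereal (norm x)" unfolding rho_minus_def by simp
  then show ?thesis unfolding check_def gamma_minus_def by (intro Sup_upper) simp
qed

lemma borel_measurable_antimono_ennreal:
  fixes \<psi> :: "real \<Rightarrow> ennreal"
  assumes "antimono \<psi>"
  shows "\<psi> \<in> borel_measurable borel"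
proof (rule borel_measurableI_greater)
  fix y
  \<comment> \<open>the superlevel set is down-closed, so minus its indicator is monotone\<close>
  let ?D = "{s. y < \<psi> s}"
  have "mono (\<lambda>s. - indicator ?D s :: real)"
    using assms by (auto simp: mono_def antimono_def indicator_def intro: less_le_trans)
  then have "(\<lambda>s. - indicator ?D s :: real) \<in> borel_measurable borel" by (rule borel_measurable_mono)
  then have "(\<lambda>s. - indicator ?D s :: real) -` {-1} \<inter> space borel \<in> sets borel"
    by (rule measurable_sets) simp
  moreover have "(\<lambda>s. - indicator ?D s :: real) -` {-1} \<inter> space borel = {x \<in> space borel. y < \<psi> x}"
    by (auto simp: indicator_def)
  ultimately show "{x \<in> space borel. y < \<psi> x} \<in> sets borel" by simp
qed

lemma borel_measurable_antimono_comp_check: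
  fixes f :: "'a::euclidean_space \<Rightarrow> ereal" and \<psi> :: "ereal \<Rightarrow> ennreal"
  assumes "antimono \<psi>"
  shows "(\<lambda>x. \<psi> (check f x)) \<in> borel_measurable lebesgue"
proof -
  have "antimono (\<lambda>s. \<psi> (gamma_minus f s))"
    by (intro antimonoI) (metis assms antimonoD gamma_minus_mono)
  then have "(\<lambda>s. \<psi> (gamma_minus f s)) \<in> borel_measurable borel"
    by (rule borel_measurable_antimono_ennreal)
  then have "(\<lambda>x::'a. \<psi> (gamma_minus f (norm x))) \<in> borel_measurable lborel"
    using measurable_compose[OF borel_measurable_norm] by simp
  then show ?thesis unfolding check_def by (rule measurable_completion)
qed

lemma mono_ereal_shift: "mono (\<lambda>z::ereal. z + ereal m)" "mono (\<lambda>z::ereal. z - ereal m)"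
  by (auto intro!: monoI add_right_mono ereal_minus_mono)

lemma borel_measurable_lux_integrand_check:
  assumes "young_function \<phi>" and "mono h"
  shows "(\<lambda>x::'a::euclidean_space. lux_integrand \<phi> r (h (check f x))) \<in> borel_measurable lebesgue"
  using assms lux_integrand_antimono
  by (intro borel_measurable_antimono_comp_check) (auto simp: antimono_def mono_def)

lemma lux_integrand_check_superlevel:
  assumes y: "young_function \<phi>" and h: "mono h" and hb: "h (ereal b) \<le> ereal a"
    and a: "c < lux_integrand \<phi> r (ereal a)" and x: "ereal (norm x) < rho_minus f (ereal b)"
  shows "c < lux_integrand \<phi> r (h (check f x))"
proof -
  have "h (check f x) \<le> h (ereal b)" using h check_le_of_norm_less_rho_minus[OF x] by (rule monoD)
  then have "h (check f x) \<le> ereal a" using hb by (rule order_trans)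
  then show ?thesis using a lux_integrand_antimono[OF y] by (auto elim: less_le_trans)
qed

section \<open>Layer-cake formula\<close>

lemma sigma_finite_lebesgue: "sigma_finite_measure (lebesgue :: 'a::euclidean_space measure)"
proof
  let ?A = "range (\<lambda>n::nat. cball (0::'a) (real n))"
  have "\<Union>?A = UNIV" by (auto intro: real_arch_simple)
  then show "\<exists>A::'a set set. countable A \<and> A \<subseteq> sets lebesgue \<and> \<Union>A = space lebesgue \<and>
      (\<forall>a\<in>A. emeasure lebesgue a \<noteq> \<infinity>)"
    using emeasure_lborel_cball_finite by (intro exI[of _ ?A]) (auto simp: less_top)
qed

lemma emeasure_lborel_atLeast_0: "emeasure lborel {0::real..} = \<infinity>"
proof (rule ccontr)
  assume "emeasure lborel {0::real..} \<noteq> \<infinity>"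
  then obtain c where c: "emeasure lborel {0::real..} = ennreal c" "0 \<le> c"
    by (cases "emeasure lborel {0::real..}" rule: ennreal_cases) auto
  have "emeasure lborel {0::real..c+1} \<le> emeasure lborel {0::real..}"
    by (rule emeasure_mono) auto
  then show False using c by (simp add: ennreal_le_iff)
qed

lemma nn_integral_layer_cake:
  assumes "sigma_finite_measure M" and w[measurable]: "w \<in> borel_measurable M"
  shows "(\<integral>\<^sup>+x. w x \<partial>M) =
    (\<integral>\<^sup>+t. indicator {0..} t * emeasure M {x \<in> space M. ennreal t < w x} \<partial>lborel)"
proof -
  interpret pair_sigma_finite M lborel
    using assms(1) by (simp add: pair_sigma_finite_def lborel.sigma_finite_measure_axioms)
  define G where "G = (\<lambda>(x, t::real). indicator {t. 0 \<le> t \<and> ennreal t < w x} t :: ennreal)"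
  have G_meas [measurable]: "G \<in> borel_measurable (M \<Otimes>\<^sub>M lborel)"
    unfolding G_def indicator_def by measurable
  have "w x = (\<integral>\<^sup>+t. G (x, t) \<partial>lborel)" for x
  proof (cases "w x" rule: ennreal_cases)
    case (real c)
    then have "{t. 0 \<le> t \<and> ennreal t < w x} = {0..<c}" by (auto simp: ennreal_less_iff)
    then show ?thesis using real by (simp add: G_def)
  next
    case top
    then have "{t. 0 \<le> t \<and> ennreal t < w x} = {0..}" by auto
    then show ?thesis using top by (simp add: G_def emeasure_lborel_atLeast_0)
  qed
  then have "(\<integral>\<^sup>+x. w x \<partial>M) = (\<integral>\<^sup>+x. (\<integral>\<^sup>+t. G (x, t) \<partial>lborel) \<partial>M)"
    by simp
  also have "\<dots> = (\<integral>\<^sup>+t. (\<integral>\<^sup>+x. G (x, t) \<partial>M) \<partial>lborel)"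
    by (rule Fubini[OF G_meas, symmetric])
  also have "\<dots> = (\<integral>\<^sup>+t. indicator {0..} t * emeasure M {x \<in> space M. ennreal t < w x} \<partial>lborel)"
  proof (rule nn_integral_cong)
    fix t :: real
    have "(\<integral>\<^sup>+x. G (x, t) \<partial>M) = (\<integral>\<^sup>+x. indicator {0..} t * indicator {x \<in> space M. ennreal t < w x} x \<partial>M)"
      by (rule nn_integral_cong) (auto simp: G_def indicator_def)
    then show "(\<integral>\<^sup>+x. G (x, t) \<partial>M) = indicator {0..} t * emeasure M {x \<in> space M. ennreal t < w x}"
      by (simp add: nn_integral_cmult)
  qed
  finally show ?thesis .
qed

lemma borel_measurable_emeasure_superlevel:
  assumes [measurable]: "F \<in> borel_measurable M"
  shows "(\<lambda>t::real. emeasure M {x \<in> space M. ennreal t < F x}) \<in> borel_measurable borel"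
proof (rule borel_measurable_antimono_ennreal)
  show "antimono (\<lambda>t::real. emeasure M {x \<in> space M. ennreal t < F x})"
  proof (rule antimonoI, rule emeasure_mono)
    fix s s' :: real assume "s \<le> s'"
    then show "{x \<in> space M. ennreal s' < F x} \<subseteq> {x \<in> space M. ennreal s < F x}"
      by (auto intro: le_less_trans ennreal_leI)
  qed measurable
qed

lemma superlevel_in_sets:
  fixes F :: "'a \<Rightarrow> 'b::{linorder_topology, second_countable_topology}"
  assumes "F \<in> borel_measurable M"
  shows "{x \<in> space M. c < F x} \<in> sets M"
proof -
  have "F -` {c<..} \<inter> space M \<in> sets M" using assms by (rule measurable_sets) simp
  moreover have "F -` {c<..} \<inter> space M = {x \<in> space M. c < F x}" by auto
  ultimately show ?thesis by simp
qed

lemma nn_integral_le_of_emeasure_superlevel_le: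
  assumes M: "sigma_finite_measure M"
    and F [measurable]: "F \<in> borel_measurable M" and G [measurable]: "G \<in> borel_measurable M"
    and superlevel: "\<And>t E. 0 \<le> t \<Longrightarrow> E \<in> sets M \<Longrightarrow> E \<subseteq> {x \<in> space M. ennreal t < h x} \<Longrightarrow>
      emeasure M E \<le> K * (emeasure M {x \<in> space M. ennreal t < F x} + emeasure M {x \<in> space M. ennreal t < G x})"
  shows "(\<integral>\<^sup>+x. h x \<partial>M) \<le> K * ((\<integral>\<^sup>+x. F x \<partial>M) + (\<integral>\<^sup>+x. G x \<partial>M))"
  \<comment> \<open>\<open>h\<close> need not be measurable: its integral is the supremum over simple functions below it\<close>
  unfolding nn_integral_def[of M h]
proof (rule SUP_least)
  let ?\<mu> = "\<lambda>F t. indicator {0..} t * emeasure M {x \<in> space M. ennreal t < F x}"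
  fix s assume "s \<in> {g. simple_function M g \<and> g \<le> h}"
  then have s: "simple_function M s" "\<And>x. s x \<le> h x" by (auto simp: le_fun_def)
  then have s_meas [measurable]: "s \<in> borel_measurable M" by (simp add: borel_measurable_simple_function)
  have [measurable]: "(\<lambda>t. emeasure M {x \<in> space M. ennreal t < F x}) \<in> borel_measurable borel"
    "(\<lambda>t. emeasure M {x \<in> space M. ennreal t < G x}) \<in> borel_measurable borel"
    by (simp_all add: borel_measurable_emeasure_superlevel)
  have "integral\<^sup>S M s = (\<integral>\<^sup>+t. ?\<mu> s t \<partial>lborel)"
    using nn_integral_layer_cake[OF M s_meas] s(1) by (simp add: nn_integral_eq_simple_integral)
  also have "\<dots> \<le> (\<integral>\<^sup>+t. K * ?\<mu> F t + K * ?\<mu> G t \<partial>lborel)"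
  proof (rule nn_integral_mono)
    fix t :: real
    have "{x \<in> space M. ennreal t < s x} \<subseteq> {x \<in> space M. ennreal t < h x}"
      using s(2) by (auto intro: less_le_trans)
    then show "?\<mu> s t \<le> K * ?\<mu> F t + K * ?\<mu> G t"
      using superlevel[of t, OF _ superlevel_in_sets[OF s_meas]] by (cases "0 \<le> t") (simp_all add: distrib_left)
  qed
  also have "\<dots> = K * ((\<integral>\<^sup>+x. F x \<partial>M) + (\<integral>\<^sup>+x. G x \<partial>M))"
    by (simp add: nn_integral_add nn_integral_cmult nn_integral_layer_cake[OF M F]
        nn_integral_layer_cake[OF M G] distrib_left)
  finally show "integral\<^sup>S M s \<le> K * ((\<integral>\<^sup>+x. F x \<partial>M) + (\<integral>\<^sup>+x. G x \<partial>M))" .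
qed

section \<open>Covering and volume estimates\<close>

lemma ex_incseq_cofinal:
  fixes A :: "real set"
  assumes ne: "A \<noteq> {}" and down: "\<And>a a'. a \<in> A \<Longrightarrow> a' \<le> a \<Longrightarrow> a' \<in> A"
    and nomax: "\<And>a. a \<in> A \<Longrightarrow> \<exists>a'\<in>A. a < a'"
  obtains s where "incseq s" "\<And>n. s n \<in> A" "\<And>a. a \<in> A \<Longrightarrow> \<exists>n. a \<le> s n"
proof (cases "bdd_above A")
  case True
  \<comment> \<open>\<open>A\<close> is the open ray below its supremum\<close>
  define s where "s n = Sup A - 1 / (real n + 1)" for n :: nat
  have "incseq s" unfolding s_def by (intro incseq_SucI) (simp add: field_simps)
  moreover have "s n \<in> A" for n
  proof -
    have "s n < Sup A" unfolding s_def by simp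
    then show ?thesis using less_cSup_iff[OF ne True] down by (meson less_imp_le)
  qed
  moreover have "\<exists>n. a \<le> s n" if a: "a \<in> A" for a
  proof -
    have "a < Sup A" using nomax[OF a] cSup_upper[OF _ True] by fastforce
    then obtain n where "inverse (real (Suc n)) < Sup A - a" using reals_Archimedean[of "Sup A - a"] by auto
    then have "a \<le> s n" unfolding s_def by (simp add: inverse_eq_divide add.commute)
    then show ?thesis by blast
  qed
  ultimately show thesis by (rule that)
next
  case False
  have "real n \<in> A" for n
    using False down unfolding bdd_above_def by (meson linorder_not_le order_less_imp_le)
  moreover have "\<exists>n. a \<le> real n" for a using real_arch_simple by blast
  ultimately show thesis using that[of real] by (simp add: incseq_def)
qed

lemma emeasure_le_of_increasing_cover:
  fixes S :: "real \<Rightarrow> 'a set"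
  assumes mono: "\<And>a a'. a \<le> a' \<Longrightarrow> S a \<subseteq> S a'"
    and down: "\<And>a a'. a \<in> A \<Longrightarrow> a' \<le> a \<Longrightarrow> a' \<in> A"
    and nomax: "\<And>a. a \<in> A \<Longrightarrow> \<exists>a'\<in>A. a < a'"
    and bound: "\<And>a. a \<in> A \<Longrightarrow> \<exists>B\<in>sets M. S a \<subseteq> B \<and> emeasure M B \<le> C"
    and E: "E \<in> sets M" "E \<subseteq> (\<Union>a\<in>A. S a)"
  shows "emeasure M E \<le> C"
proof (cases "A = {}")
  case True
  then show ?thesis using E by simp
next
  case False
  obtain s where s: "incseq s" "\<And>n. s n \<in> A" "\<And>a. a \<in> A \<Longrightarrow> \<exists>n. a \<le> s n"
    by (rule ex_incseq_cofinal[of A]) (use False down nomax in auto)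
  obtain B where B: "\<And>n. B n \<in> sets M" "\<And>n. S (s n) \<subseteq> B n" "\<And>n. emeasure M (B n) \<le> C"
    using bound[OF s(2)] by metis
  \<comment> \<open>the covering sets \<open>B n\<close> need not increase, but their tails' intersections do\<close>
  define T where "T n = (\<Inter>m\<in>{n..}. B m)" for n
  have T: "T n \<in> sets M" for n unfolding T_def by (intro sets.countable_INT') (auto simp: B(1))
  have "E \<subseteq> (\<Union>n. T n)"
  proof
    fix x assume "x \<in> E"
    then obtain a n where "x \<in> S a" "a \<le> s n" using E(2) s(3) by blast
    have "x \<in> B m" if "n \<le> m" for m
    proof -
      have "a \<le> s m" using \<open>a \<le> s n\<close> s(1) that by (meson incseq_def order_trans)
      then show ?thesis using mono B(2) \<open>x \<in> S a\<close> by blast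
    qed
    then show "x \<in> (\<Union>n. T n)" unfolding T_def by blast
  qed
  then have "emeasure M E \<le> emeasure M (\<Union>n. T n)" by (rule emeasure_mono) (use T in auto)
  also have "\<dots> = (SUP n. emeasure M (T n))"
    using T by (intro SUP_emeasure_incseq[symmetric]) (auto simp: T_def intro!: incseq_SucI)
  also have "\<dots> \<le> C"
  proof (rule SUP_least)
    fix n
    have "emeasure M (T n) \<le> emeasure M (B n)" by (rule emeasure_mono) (auto simp: T_def B(1))
    then show "emeasure M (T n) \<le> C" using B(3)[of n] by simp
  qed
  finally show ?thesis .
qed

lemma power_add_le:
  fixes x y :: real
  assumes "0 \<le> x" "0 \<le> y" "0 < n"
  shows "(x + y) ^ n \<le> 2 ^ (n - 1) * (x ^ n + y ^ n)"
proof -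
  have "convex_on {0..} (\<lambda>x::real. x ^ n)"
    using convex_on_subset[OF convex_power_even] convex_power_odd by (cases "even n") auto
  then have "((x + y) / 2) ^ n \<le> (x ^ n + y ^ n) / 2"
    using convex_onD[of "{0..}" "\<lambda>x. x ^ n" "1/2" x y] assms by (simp add: field_simps)
  moreover have "(2::real) ^ n = 2 * 2 ^ (n - 1)" using \<open>0 < n\<close> by (simp flip: power_Suc)
  ultimately show ?thesis by (simp add: power_divide field_simps)
qed

lemma emeasure_cball_add_le:
  fixes c :: "'a::euclidean_space"
  assumes "0 \<le> r" "0 \<le> s"
  shows "emeasure lborel (cball c (r + s))
    \<le> 2 ^ (DIM('a) - 1) * (emeasure lborel (ball (0::'a) r) + emeasure lborel (ball (0::'a) s))"
proof -
  let ?N = "DIM('a)" and ?\<omega> = "unit_ball_vol (DIM('a))"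
  have "?\<omega> * (r + s) ^ ?N \<le> ?\<omega> * (2 ^ (?N - 1) * (r ^ ?N + s ^ ?N))"
    using assms by (intro mult_left_mono power_add_le) auto
  then have "ennreal (?\<omega> * (r + s) ^ ?N) \<le> ennreal (2 ^ (?N - 1) * (?\<omega> * r ^ ?N + ?\<omega> * s ^ ?N))"
    by (simp add: ennreal_leI algebra_simps)
  then show ?thesis
    using assms by (simp add: emeasure_cball emeasure_ball ennreal_mult' ennreal_plus flip: ennreal_power)
qed

lemma sum_set_subset_cball_add:
  fixes P Q :: "'a::real_normed_vector set"
  assumes "P \<subseteq> cball cP rP" "Q \<subseteq> cball cQ rQ"
  shows "{u + v | u v. u \<in> P \<and> v \<in> Q} \<subseteq> cball (cP + cQ) (rP + rQ)"
proof clarify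
  fix u v assume "u \<in> P" "v \<in> Q"
  then have "u \<in> cball cP rP" "v \<in> cball cQ rQ" using assms by blast+
  then have "norm ((cP - u) + (cQ - v)) \<le> rP + rQ"
    by (intro norm_triangle_le add_mono) (simp_all add: dist_norm)
  moreover have "cP + cQ - (u + v) = (cP - u) + (cQ - v)" by (simp add: algebra_simps)
  ultimately have "norm (cP + cQ - (u + v)) \<le> rP + rQ" by (simp only:)
  then show "u + v \<in> cball (cP + cQ) (rP + rQ)" by (simp add: dist_norm)
qed

lemma emeasure_lborel_ball_le:
  fixes W :: "'a::euclidean_space set"
  assumes "\<And>x. ereal (norm x) < ereal \<rho> \<Longrightarrow> x \<in> W" "W \<in> sets lebesgue"
  shows "emeasure lborel (ball (0::'a) \<rho>) \<le> emeasure lebesgue W"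
proof -
  have "emeasure lborel (ball (0::'a) \<rho>) = emeasure lebesgue (ball (0::'a) \<rho>)"
    by (simp add: emeasure_completion)
  also have "\<dots> \<le> emeasure lebesgue W" using assms by (intro emeasure_mono subsetI) auto
  finally show ?thesis .
qed

lemma emeasure_lebesgue_UNIV: "emeasure lebesgue (UNIV :: 'a::euclidean_space set) = \<infinity>"
  using emeasure_completion[of UNIV lborel] by simp

lemma eq_UNIV_if_enc_radius_unbounded:
  fixes Z W :: "'a::euclidean_space set"
  assumes "\<not> bounded Z" "\<And>x. ereal (norm x) < enc_radius Z \<Longrightarrow> x \<in> W"
  shows "W = UNIV"
proof -
  have "x \<in> W" for x using assms(2)[of x] enc_radius_unbounded[OF assms(1)] by simp
  then show ?thesis by auto
qed

lemma emeasure_cover_sum_set_le: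
  fixes P Q U V :: "'a::euclidean_space set"
  assumes U: "U \<in> sets lebesgue" and V: "V \<in> sets lebesgue"
    and PU: "\<And>x. ereal (norm x) < enc_radius P \<Longrightarrow> x \<in> U"
    and QV: "\<And>x. ereal (norm x) < enc_radius Q \<Longrightarrow> x \<in> V"
  shows "\<exists>B\<in>sets lebesgue. {u + v | u v. u \<in> P \<and> v \<in> Q} \<subseteq> B \<and>
    emeasure lebesgue B \<le> 2 ^ (DIM('a) - 1) * (emeasure lebesgue U + emeasure lebesgue V)"
proof (cases "P = {} \<or> Q = {}")
  case True
  then show ?thesis by (intro bexI[of _ "{}"]) auto
next
  case nonempty: False
  show ?thesis
  proof (cases "bounded P \<and> bounded Q")
    case False
    have "U = UNIV \<or> V = UNIV"
      using False eq_UNIV_if_enc_radius_unbounded[OF _ PU] eq_UNIV_if_enc_radius_unbounded[OF _ QV]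
      by blast
    then have "emeasure lebesgue U + emeasure lebesgue V = \<infinity>"
      by (elim disjE) (simp_all add: emeasure_lebesgue_UNIV)
    then show ?thesis by (intro bexI[of _ UNIV]) (auto simp: ennreal_mult_eq_top_iff)
  next
    case True
    have "bounded P" "P \<noteq> {}" "bounded Q" "Q \<noteq> {}" using True nonempty by auto
    obtain cP rP where P: "P \<subseteq> cball cP rP" "0 \<le> rP" "enc_radius P = ereal rP"
      "\<And>c' r'. P \<subseteq> cball c' r' \<Longrightarrow> rP \<le> r'"
      using enc_radius_bounded[OF \<open>bounded P\<close> \<open>P \<noteq> {}\<close>] by blast
    obtain cQ rQ where Q: "Q \<subseteq> cball cQ rQ" "0 \<le> rQ" "enc_radius Q = ereal rQ"
      "\<And>c' r'. Q \<subseteq> cball c' r' \<Longrightarrow> rQ \<le> r'"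
      using enc_radius_bounded[OF \<open>bounded Q\<close> \<open>Q \<noteq> {}\<close>] by blast
    have "emeasure lebesgue (cball (cP + cQ) (rP + rQ)) = emeasure lborel (cball (cP + cQ) (rP + rQ))"
      by (simp add: emeasure_completion)
    also have "\<dots> \<le> 2 ^ (DIM('a) - 1) * (emeasure lborel (ball (0::'a) rP) + emeasure lborel (ball (0::'a) rQ))"
      by (rule emeasure_cball_add_le[OF P(2) Q(2)])
    also have "\<dots> \<le> 2 ^ (DIM('a) - 1) * (emeasure lebesgue U + emeasure lebesgue V)"
      using mult_left_mono[OF add_mono[OF emeasure_lborel_ball_le[OF PU[unfolded P(3)] U]
          emeasure_lborel_ball_le[OF QV[unfolded Q(3)] V]]]
      by simp
    finally show ?thesis using sum_set_subset_cball_add[OF P(1) Q(1)]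
      by (intro bexI[of _ "cball (cP + cQ) (rP + rQ)"]) auto
  qed
qed

section \<open>Sublevel sets of the infimal convolution\<close>

lemma inf_conv_less_imp_sum_of_sublevels:
  fixes f g :: "'a::real_vector \<Rightarrow> ereal"
  assumes f_range: "\<And>x. f x \<noteq> -\<infinity>" and g_range: "\<And>x. g x \<noteq> -\<infinity>"
    and mf: "Inf (range f) = ereal mf" and mg: "Inf (range g) = ereal mg"
    and less: "inf_conv f g x < ereal a"
  shows "\<exists>u v. x = u + v \<and> f u < ereal (a - mg) \<and> g v < ereal (a - mf)"
proof -
  obtain v where v: "f (x - v) + g v < ereal a"
    using less unfolding inf_conv_def by (auto simp: INF_less_iff)
  have "ereal mf \<le> f (x - v)" "ereal mg \<le> g v"
    using mf mg by (metis INF_lower UNIV_I)+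
  then have "f (x - v) < ereal (a - mg)" "g v < ereal (a - mf)"
    using v f_range[of "x - v"] g_range[of v] by (cases "f (x - v)"; cases "g v"; auto)+
  then show ?thesis by (intro exI[of _ "x - v"] exI[of _ v]) auto
qed

lemma inf_conv_nonneg:
  assumes mf: "Inf (range f) = ereal mf" and mg: "Inf (range g) = ereal mg" and "0 \<le> mf + mg"
  shows "0 \<le> inf_conv f g x"
  unfolding inf_conv_def
proof (rule INF_greatest)
  fix y
  have "ereal mf + ereal mg \<le> f (x - y) + g y"
    using mf mg by (metis INF_lower UNIV_I add_mono)
  then show "0 \<le> f (x - y) + g y" using \<open>0 \<le> mf + mg\<close> by (simp add: order_trans[rotated])
qed

lemma emeasure_sum_of_sublevels_le:
  fixes f g :: "'a::euclidean_space \<Rightarrow> ereal"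
  assumes sum: "0 \<le> mf + mg" and y: "young_function \<phi>" and a: "c < lux_integrand \<phi> r (ereal a)"
  shows "\<exists>B\<in>sets lebesgue. {u + v | u v. f u < ereal (a - mg) \<and> g v < ereal (a - mf)} \<subseteq> B \<and>
    emeasure lebesgue B \<le> 2 ^ (DIM('a) - 1) *
      (emeasure lebesgue {x. c < lux_integrand \<phi> r (check f x - ereal ((mf - mg) / 2))}
       + emeasure lebesgue {x. c < lux_integrand \<phi> r (check g x + ereal ((mf - mg) / 2))})"
    (is "\<exists>B\<in>_. _ \<subseteq> B \<and> _ \<le> _ * (emeasure _ ?UF + emeasure _ ?UG)")
proof -
  have "?UF \<in> sets lebesgue" "?UG \<in> sets lebesgue"
    using superlevel_in_sets[OF borel_measurable_lux_integrand_check[OF y mono_ereal_shift(2)], of c]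
      superlevel_in_sets[OF borel_measurable_lux_integrand_check[OF y mono_ereal_shift(1)], of c]
    by simp_all
  \<comment> \<open>the shift by \<open>(mf - mg)/2\<close> moves both sublevel thresholds below \<open>a\<close>, thanks to \<open>0 \<le> mf + mg\<close>\<close>
  moreover have shift: "ereal (a - mg) - ereal ((mf - mg) / 2) \<le> ereal a"
    "ereal (a - mf) + ereal ((mf - mg) / 2) \<le> ereal a"
    using sum by (simp_all add: field_simps)
  moreover have "x \<in> ?UF" if "ereal (norm x) < rho_minus f (ereal (a - mg))" for x
    using lux_integrand_check_superlevel[OF y mono_ereal_shift(2) shift(1) a that] by simp
  moreover have "x \<in> ?UG" if "ereal (norm x) < rho_minus g (ereal (a - mf))" for x
    using lux_integrand_check_superlevel[OF y mono_ereal_shift(1) shift(2) a that] by simp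
  ultimately show ?thesis
    using emeasure_cover_sum_set_le[of ?UF ?UG "{u. f u < ereal (a - mg)}" "{v. g v < ereal (a - mf)}"]
    unfolding rho_minus_def by auto
qed

lemma emeasure_superlevel_inf_conv_le:
  fixes f g :: "'a::euclidean_space \<Rightarrow> ereal"
  assumes f_range: "\<And>x. f x \<noteq> -\<infinity>" and g_range: "\<And>x. g x \<noteq> -\<infinity>"
    and mf: "Inf (range f) = ereal mf" and mg: "Inf (range g) = ereal mg" and sum: "0 \<le> mf + mg"
    and y: "young_function \<phi>" and r: "0 < r"
    and E: "E \<in> sets lebesgue" "E \<subseteq> {x. c < lux_integrand \<phi> r (inf_conv f g x)}"
  shows "emeasure lebesgue E \<le> 2 ^ (DIM('a) - 1) *
    (emeasure lebesgue {x. c < lux_integrand \<phi> r (check f x - ereal ((mf - mg) / 2))}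
     + emeasure lebesgue {x. c < lux_integrand \<phi> r (check g x + ereal ((mf - mg) / 2))})"
    (is "_ \<le> _ * (emeasure _ ?UF + emeasure _ ?UG)")
proof (rule emeasure_le_of_increasing_cover)
  let ?A = "{a. c < lux_integrand \<phi> r (ereal a)}"
  let ?S = "\<lambda>a. {u + v | u v. f u < ereal (a - mg) \<and> g v < ereal (a - mf)}"
  show "?S a \<subseteq> ?S a'" if "a \<le> a'" for a a'
  proof clarify
    fix u v assume "f u < ereal (a - mg)" "g v < ereal (a - mf)"
    then have "f u < ereal (a' - mg)" "g v < ereal (a' - mf)"
      using that by (auto elim!: order_less_le_trans)
    then show "\<exists>u' v'. u + v = u' + v' \<and> f u' < ereal (a' - mg) \<and> g v' < ereal (a' - mf)" by blast
  qed
  show "a' \<in> ?A" if "a \<in> ?A" "a' \<le> a" for a a'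
    using that lux_integrand_antimono[OF y, of "ereal a'" "ereal a" r] by auto
  show "\<exists>a'\<in>?A. a < a'" if "a \<in> ?A" for a
  proof -
    have "c < lux_integrand \<phi> r (ereal a)" using that by simp
    then obtain a' where "a < a'" "c < lux_integrand \<phi> r (ereal a')"
      by (rule lux_integrand_superlevel_right_open[OF y r])
    then show ?thesis by blast
  qed
  show "E \<subseteq> (\<Union>a\<in>?A. ?S a)"
  proof
    fix x assume "x \<in> E"
    then have cx: "c < lux_integrand \<phi> r (inf_conv f g x)" using E(2) by auto
    then have "inf_conv f g x \<noteq> \<infinity>" using y by auto
    then obtain b where b: "inf_conv f g x = ereal b"
      using inf_conv_nonneg[OF mf mg sum] by (cases "inf_conv f g x") auto
    obtain a where "b < a" "c < lux_integrand \<phi> r (ereal a)"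
      using lux_integrand_superlevel_right_open[OF y r] cx b by auto
    then show "x \<in> (\<Union>a\<in>?A. ?S a)"
      using inf_conv_less_imp_sum_of_sublevels[OF f_range g_range mf mg, of x a] b by auto
  qed
  show "\<exists>B\<in>sets lebesgue. ?S a \<subseteq> B \<and>
    emeasure lebesgue B \<le> 2 ^ (DIM('a) - 1) * (emeasure lebesgue ?UF + emeasure lebesgue ?UG)"
    if "a \<in> ?A" for a
    by (rule emeasure_sum_of_sublevels_le[OF sum y]) (use that in simp)
qed (use E in auto)

section \<open>Luxemburg norms\<close>

lemma lux_norm_le:
  assumes "0 < r" "(\<integral>\<^sup>+x. \<phi> (ennreal (1 / r) * u x) \<partial>lebesgue) \<le> 1"
  shows "lux_norm \<phi> (u :: 'a::euclidean_space \<Rightarrow> ennreal) \<le> ennreal r"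
  unfolding lux_norm_def by (rule Inf_lower) (use assms in auto)

lemma lux_norm_lessE:
  assumes "lux_norm \<phi> (u :: 'a::euclidean_space \<Rightarrow> ennreal) < x"
  obtains r where "0 < r" "(\<integral>\<^sup>+x. \<phi> (ennreal (1 / r) * u x) \<partial>lebesgue) \<le> 1" "ennreal r < x"
  using assms unfolding lux_norm_def by (auto simp: Inf_less_iff)

lemma nn_integral_young_rescale_le:
  fixes u :: "'a \<Rightarrow> ennreal"
  assumes y: "young_function \<phi>" and r: "0 < r" "r \<le> r'"
    and meas: "(\<lambda>x. \<phi> (ennreal (1 / r) * u x)) \<in> borel_measurable M"
    and one: "(\<integral>\<^sup>+x. \<phi> (ennreal (1 / r) * u x) \<partial>M) \<le> 1"
  shows "(\<integral>\<^sup>+x. \<phi> (ennreal (1 / r') * u x) \<partial>M) \<le> ennreal (r / r')"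
proof -
  have "ennreal (r / r') * ennreal (1 / r) = ennreal (1 / r')"
    using r by (simp add: ennreal_mult'' [symmetric])
  then have eq: "ennreal (1 / r') * u x = ennreal (r / r') * (ennreal (1 / r) * u x)" for x
    by (simp add: mult.assoc[symmetric])
  have lam: "ennreal (r / r') \<le> 1" using r by (simp add: ennreal_le_1 field_simps)
  have "(\<integral>\<^sup>+x. \<phi> (ennreal (1 / r') * u x) \<partial>M) \<le> (\<integral>\<^sup>+x. ennreal (r / r') * \<phi> (ennreal (1 / r) * u x) \<partial>M)"
    by (intro nn_integral_mono) (simp add: eq young_function_scale[OF y lam])
  also have "\<dots> = ennreal (r / r') * (\<integral>\<^sup>+x. \<phi> (ennreal (1 / r) * u x) \<partial>M)"
    using meas by (rule nn_integral_cmult)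
  also have "\<dots> \<le> ennreal (r / r')" using mult_left_mono[OF one, of "ennreal (r / r')"] by simp
  finally show ?thesis .
qed

context
  fixes \<phi> :: "ennreal \<Rightarrow> ennreal" and h u v :: "'a::euclidean_space \<Rightarrow> ennreal" and K :: real
  assumes y: "young_function \<phi>" and K: "1 \<le> K"
    and le: "\<And>r. 0 < r \<Longrightarrow> (\<integral>\<^sup>+x. \<phi> (ennreal (1 / r) * h x) \<partial>lebesgue) \<le>
      ennreal K * ((\<integral>\<^sup>+x. \<phi> (ennreal (1 / r) * u x) \<partial>lebesgue) + (\<integral>\<^sup>+x. \<phi> (ennreal (1 / r) * v x) \<partial>lebesgue))"
    and u_meas: "\<And>r. 0 < r \<Longrightarrow> (\<lambda>x. \<phi> (ennreal (1 / r) * u x)) \<in> borel_measurable lebesgue"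
    and v_meas: "\<And>r. 0 < r \<Longrightarrow> (\<lambda>x. \<phi> (ennreal (1 / r) * v x)) \<in> borel_measurable lebesgue"
begin

lemma lux_norm_le_of_admissible:
  assumes a: "0 < a" "(\<integral>\<^sup>+x. \<phi> (ennreal (1 / a) * u x) \<partial>lebesgue) \<le> 1"
    and b: "0 < b" "(\<integral>\<^sup>+x. \<phi> (ennreal (1 / b) * v x) \<partial>lebesgue) \<le> 1"
  shows "lux_norm \<phi> h \<le> ennreal (K * (a + b))"
proof (rule lux_norm_le)
  let ?r = "K * (a + b)"
  show r: "0 < ?r" using K a b by simp
  have "a + b \<le> ?r" using K a b by (simp add: mult_le_cancel_right1)
  then have "a \<le> ?r" "b \<le> ?r" using a b by linarith+
  then have "(\<integral>\<^sup>+x. \<phi> (ennreal (1 / ?r) * u x) \<partial>lebesgue) \<le> ennreal (a / ?r)"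
    "(\<integral>\<^sup>+x. \<phi> (ennreal (1 / ?r) * v x) \<partial>lebesgue) \<le> ennreal (b / ?r)"
    using nn_integral_young_rescale_le[OF y a(1) _ u_meas[OF a(1)] a(2)]
      nn_integral_young_rescale_le[OF y b(1) _ v_meas[OF b(1)] b(2)] by blast+
  then have "(\<integral>\<^sup>+x. \<phi> (ennreal (1 / ?r) * h x) \<partial>lebesgue) \<le> ennreal K * (ennreal (a / ?r) + ennreal (b / ?r))"
    using le[OF r] by (auto elim!: order_trans intro!: mult_left_mono add_mono)
  also have "\<dots> = ennreal (K * (a / ?r + b / ?r))"
    using K a b by (simp add: ennreal_mult)
  also have "K * (a / ?r + b / ?r) = 1"
    using K a b by (simp add: add_divide_distrib[symmetric])
  finally show "(\<integral>\<^sup>+x. \<phi> (ennreal (1 / ?r) * h x) \<partial>lebesgue) \<le> 1" by simp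
qed

lemma lux_norm_le_of_nn_integral_le: "lux_norm \<phi> h \<le> ennreal K * (lux_norm \<phi> u + lux_norm \<phi> v)"
proof (cases "lux_norm \<phi> u = \<infinity> \<or> lux_norm \<phi> v = \<infinity>")
  case True
  then show ?thesis using K by (auto simp: ennreal_mult_eq_top_iff)
next
  case False
  then obtain a0 b0 where ab: "lux_norm \<phi> u = ennreal a0" "0 \<le> a0" "lux_norm \<phi> v = ennreal b0" "0 \<le> b0"
    by (metis ennreal_cases infinity_ennreal_def)
  show ?thesis
  proof (rule ennreal_le_epsilon)
    fix e :: real assume "0 < e"
    let ?e = "e / (2 * K)"
    have e: "0 < ?e" "K * (a0 + ?e + (b0 + ?e)) = K * (a0 + b0) + e"
      using \<open>0 < e\<close> K by (auto simp: field_simps)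
    have "lux_norm \<phi> u < ennreal (a0 + ?e)" "lux_norm \<phi> v < ennreal (b0 + ?e)"
      using ab e(1) by (simp_all add: ennreal_less_iff)
    then obtain a b where a: "0 < a" "(\<integral>\<^sup>+x. \<phi> (ennreal (1 / a) * u x) \<partial>lebesgue) \<le> 1" "ennreal a < ennreal (a0 + ?e)"
      and b: "0 < b" "(\<integral>\<^sup>+x. \<phi> (ennreal (1 / b) * v x) \<partial>lebesgue) \<le> 1" "ennreal b < ennreal (b0 + ?e)"
      by (elim lux_norm_lessE)
    have "lux_norm \<phi> h \<le> ennreal (K * (a + b))" by (rule lux_norm_le_of_admissible[OF a(1,2) b(1,2)])
    also have "\<dots> \<le> ennreal (K * (a0 + ?e + (b0 + ?e)))"
      using a b K by (intro ennreal_leI mult_left_mono add_mono) (simp_all del: ennreal_plus add: ennreal_less_iff)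
    also have "\<dots> = ennreal (K * (a0 + b0)) + ennreal e"
      unfolding e(2) using ab K \<open>0 < e\<close> by (intro ennreal_plus) auto
    also have "ennreal (K * (a0 + b0)) = ennreal K * (lux_norm \<phi> u + lux_norm \<phi> v)"
      using ab K by (simp add: ennreal_mult)
    finally show "lux_norm \<phi> h \<le> ennreal K * (lux_norm \<phi> u + lux_norm \<phi> v) + ennreal e" .
  qed
qed

end

lemma nn_integral_lux_integrand_inf_conv_le:
  fixes f g :: "'a::euclidean_space \<Rightarrow> ereal"
  assumes f_range: "\<And>x. f x \<noteq> -\<infinity>" and g_range: "\<And>x. g x \<noteq> -\<infinity>"
    and mf: "Inf (range f) = ereal mf" and mg: "Inf (range g) = ereal mg" and sum: "0 \<le> mf + mg"
    and y: "young_function \<phi>" and r: "0 < r"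
  shows "(\<integral>\<^sup>+x. lux_integrand \<phi> r (inf_conv f g x) \<partial>lebesgue) \<le> 2 ^ (DIM('a) - 1) *
    ((\<integral>\<^sup>+x. lux_integrand \<phi> r (check f x - ereal ((mf - mg) / 2)) \<partial>lebesgue)
     + (\<integral>\<^sup>+x. lux_integrand \<phi> r (check g x + ereal ((mf - mg) / 2)) \<partial>lebesgue))"
proof (rule nn_integral_le_of_emeasure_superlevel_le[OF sigma_finite_lebesgue])
  show "(\<lambda>x. lux_integrand \<phi> r (check f x - ereal ((mf - mg) / 2))) \<in> borel_measurable lebesgue"
    "(\<lambda>x. lux_integrand \<phi> r (check g x + ereal ((mf - mg) / 2))) \<in> borel_measurable lebesgue"
    using borel_measurable_lux_integrand_check[OF y mono_ereal_shift(2)]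
      borel_measurable_lux_integrand_check[OF y mono_ereal_shift(1)] by auto
  show "emeasure lebesgue E \<le> 2 ^ (DIM('a) - 1) *
      (emeasure lebesgue {x \<in> space lebesgue. ennreal t < lux_integrand \<phi> r (check f x - ereal ((mf - mg) / 2))}
       + emeasure lebesgue {x \<in> space lebesgue. ennreal t < lux_integrand \<phi> r (check g x + ereal ((mf - mg) / 2))})"
    if "E \<in> sets lebesgue" "E \<subseteq> {x \<in> space lebesgue. ennreal t < lux_integrand \<phi> r (inf_conv f g x)}" for t E
    using emeasure_superlevel_inf_conv_le[OF f_range g_range mf mg sum y r, of E "ennreal t"] that by simp
qed

theorem theorem19:
  fixes f g :: "'a::euclidean_space \<Rightarrow> ereal" and mf mg :: real
  assumes f_meas: "f \<in> borel_measurable borel" and g_meas: "g \<in> borel_measurable borel"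
    and f_range: "\<And>x. f x \<noteq> -\<infinity>" and g_range: "\<And>x. g x \<noteq> -\<infinity>"
    and mf: "Inf (range f) = ereal mf" and mg: "Inf (range g) = ereal mg"
    and sum_nonneg: "mf + mg \<ge> 0"
  shows "(\<forall>x. inf_conv f g x \<ge> 0)
    \<and> (\<forall>x. check f x - ereal ((mf - mg) / 2) \<ge> 0)
    \<and> (\<forall>x. check g x + ereal ((mf - mg) / 2) \<ge> 0)
    \<and> (\<forall>\<phi>. young_function \<phi> \<longrightarrow>
         lux_norm \<phi> (\<lambda>x. recip (inf_conv f g x))
           \<le> 2 ^ (DIM('a) - 1) *
              (lux_norm \<phi> (\<lambda>x. recip (check f x - ereal ((mf - mg) / 2)))
               + lux_norm \<phi> (\<lambda>x. recip (check g x + ereal ((mf - mg) / 2)))))"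
proof (intro conjI allI impI)
  show "0 \<le> inf_conv f g x" for x by (rule inf_conv_nonneg[OF mf mg sum_nonneg])
  show "0 \<le> check f x - ereal ((mf - mg) / 2)" "0 \<le> check g x + ereal ((mf - mg) / 2)" for x
    using Inf_range_le_check[OF mf, of x] Inf_range_le_check[OF mg, of x] sum_nonneg
    by (cases "check f x"; cases "check g x"; auto simp: field_simps)+
  fix \<phi> :: "ennreal \<Rightarrow> ennreal" assume y: "young_function \<phi>"
  have K: "(2::ennreal) ^ (DIM('a) - 1) = ennreal (2 ^ (DIM('a) - 1))" by (simp flip: ennreal_power)
  note le = nn_integral_lux_integrand_inf_conv_le[OF f_range g_range mf mg sum_nonneg y, unfolded K]
  have meas: "(\<lambda>x. lux_integrand \<phi> r (check f x - ereal ((mf - mg) / 2))) \<in> borel_measurable lebesgue"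
    "(\<lambda>x. lux_integrand \<phi> r (check g x + ereal ((mf - mg) / 2))) \<in> borel_measurable lebesgue" for r
    using borel_measurable_lux_integrand_check[OF y mono_ereal_shift(2)]
      borel_measurable_lux_integrand_check[OF y mono_ereal_shift(1)] by auto
  show "lux_norm \<phi> (\<lambda>x. recip (inf_conv f g x))
      \<le> 2 ^ (DIM('a) - 1) *
        (lux_norm \<phi> (\<lambda>x. recip (check f x - ereal ((mf - mg) / 2)))
         + lux_norm \<phi> (\<lambda>x. recip (check g x + ereal ((mf - mg) / 2))))"
    unfolding K using le meas unfolding lux_integrand_def
    by (rule lux_norm_le_of_nn_integral_le[OF y, rotated]) (simp_all add: one_le_power)
qed

end
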